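(* Let $\alpha,\mu,\nu,\theta,\beta>0$ with $\varrho=\alpha/\mu<1$, let $(N(\infty),M(\infty))$ be distributed according to the stationary distribution of the two-class Processor-Sharing process described in the context, and let $\mathrm{F}_A(u,v)=\mathbb{E}\big(u^{N(\infty)}v^{M(\infty)}\big)$ for $(u,v)\in\mathbb{D}\times\mathbb{D}$, $\mathbb{D}$ the open unit disk. Then $\mathrm{F}_A$ extends analytically to the domain $\mathbb{D}(0,1/\varrho)\times\mathbb{C}$, where $\mathbb{D}(0,1/\varrho)$ is the open disk of center $0$ and radius $1/\varrho$ (indeed the power series defining $\mathrm{F}_A$ converges on this domain).
   Context: $(N,M)$ is the continuous-time Markov process on $\mathbb{N}^2$ with transitions $(n,m)\to(n+1,m)$ at rate $\alpha$, $(n,m)\to(n,m+1)$ at rate $\beta$, $(n,m)\to(n-1,m)$ at rate $\mu n/(n+m)$, $(n,m)\to(n,m-1)$ at rate $\nu m/(n+m)+\theta m$ (convention $0/0=0$); it models a Processor-Sharing queue with patient and impatient customers and has a stationary distribution iff $\varrho<1$. $A=\beta/\theta$. *)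

theory Defs
  imports "HOL-Analysis.Analysis"
begin

text \<open>Transition rates of the two-class Processor-Sharing process on states (n,m).
  Division by zero yields 0 in Isabelle, matching the convention 0/0 = 0.\<close>
definition ps_rate :: "real \<Rightarrow> real \<Rightarrow> real \<Rightarrow> real \<Rightarrow> real \<Rightarrow>
    nat \<times> nat \<Rightarrow> nat \<times> nat \<Rightarrow> real" where
  "ps_rate \<alpha> \<beta> \<mu> \<nu> \<theta> x y =
     (let n = fst x; m = snd x; n' = fst y; m' = snd y in
      if n' = Suc n \<and> m' = m then \<alpha>
      else if n' = n \<and> m' = Suc m then \<beta>
      else if Suc n' = n \<and> m' = m then \<mu> * real n / real (n + m)
      else if n' = n \<and> Suc m' = m then \<nu> * real m / real (n + m) + \<theta> * real m
      else 0)"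

definition is_stationary_dist :: "('s \<Rightarrow> 's \<Rightarrow> real) \<Rightarrow> ('s \<Rightarrow> real) \<Rightarrow> bool" where
  "is_stationary_dist q p \<longleftrightarrow>
     (\<forall>x. 0 \<le> p x) \<and> (p has_sum 1) UNIV \<and>
     (\<forall>x. p x * (\<Sum>\<^sub>\<infinity>y\<in>-{x}. q x y) = (\<Sum>\<^sub>\<infinity>y\<in>-{x}. p y * q y x))"

definition gen_fun :: "(nat \<times> nat \<Rightarrow> real) \<Rightarrow> complex \<Rightarrow> complex \<Rightarrow> complex" where
  "gen_fun p u v = (\<Sum>\<^sub>\<infinity>(n,m)\<in>UNIV. complex_of_real (p (n,m)) * u ^ n * v ^ m)"

end

theory Submission
  imports Defs
begin

(* Summing the balance equations over one coordinate and telescoping gives the level-crossing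
   identities  sum_n E(n,m+1) p(n,m+1) = beta P(M = m)  and  sum_m D(n+1,m) p(n+1,m) = alpha P(N = n),
   where D, E are the departure rates of the two classes.  As E(n,m) >= theta m, the first one
   makes P(M = m) decay like (beta/theta)^m / m!, so M has exponential moments of every order.
   In the second one D(n,m) = mu - mu m/(n+m); the defect m/(n+m) is at most 1/j when n >= j m,
   and otherwise P(N = n, M = m) <= P(M = m) is tiny, so
   (1 - 1/j) P(N = n+1) <= rho P(N = n) + C(j,T) T^-n  for all j and T, whence E t^N < oo
   for every t < 1/rho.
   Finally |u|^n |v|^m <= t^n + S^m dominates the double series by these two marginal series,
   and expanding in one variable at a time gives power series with the required radii. *)

definition birth_death_2d_balance :: "real \<Rightarrow> real \<Rightarrow> (nat \<Rightarrow> nat \<Rightarrow> real) \<Rightarrow>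
    (nat \<Rightarrow> nat \<Rightarrow> real) \<Rightarrow> (nat \<times> nat \<Rightarrow> real) \<Rightarrow> bool"
  where "birth_death_2d_balance \<alpha> \<beta> d e p \<longleftrightarrow>
    (\<forall>n m. p (n,m) * (\<alpha> + \<beta> + d n m + e n m) =
       (if n > 0 then \<alpha> * p (n - 1, m) else 0) + (if m > 0 then \<beta> * p (n, m - 1) else 0)
       + d (Suc n) m * p (Suc n, m) + e n (Suc m) * p (n, Suc m))"

lemma birth_death_2d_balance_swap:
  assumes "birth_death_2d_balance \<alpha> \<beta> d e p"
  shows "birth_death_2d_balance \<beta> \<alpha> (\<lambda>m n. e n m) (\<lambda>m n. d n m) (\<lambda>(m,n). p (n,m))"
  using assms unfolding birth_death_2d_balance_def by (simp add: algebra_simps)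

lemma birth_death_2d_level_crossing:
  assumes bal: "birth_death_2d_balance \<alpha> \<beta> d e p"
    and d0: "\<And>m. d 0 m = 0" and e0: "\<And>n. e n 0 = 0"
    and summable_p: "\<And>n. summable (\<lambda>m. p (n,m))"
    and summable_d: "\<And>n. summable (\<lambda>m. d n m * p (n,m))"
    and summable_e: "\<And>n. summable (\<lambda>m. e n m * p (n,m))"
  shows "(\<Sum>m. d (Suc n) m * p (Suc n, m)) = \<alpha> * (\<Sum>m. p (n,m))"
proof -
  define P where "P n = (\<Sum>m. p (n,m))" for n
  define Dn where "Dn n = (\<Sum>m. d n m * p (n,m))" for n
  define En where "En n = (\<Sum>m. e n m * p (n,m))" for n
  have P: "(\<lambda>m. p (n,m)) sums P n" and Dn: "(\<lambda>m. d n m * p (n,m)) sums Dn n"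
    and En: "(\<lambda>m. e n m * p (n,m)) sums En n" for n
    using summable_p summable_d summable_e by (simp_all add: P_def Dn_def En_def summable_sums)
  have flow: "\<alpha> * P n + Dn n = (if n > 0 then \<alpha> * P (n - 1) else 0) + Dn (Suc n)" for n
  proof -
    have "(\<lambda>m. p (n,m) * (\<alpha> + \<beta> + d n m + e n m)) =
        (\<lambda>m. (\<alpha> + \<beta>) * p (n,m) + d n m * p (n,m) + e n m * p (n,m))"
      by (simp add: fun_eq_iff algebra_simps)
    then have "(\<lambda>m. p (n,m) * (\<alpha> + \<beta> + d n m + e n m)) sums ((\<alpha> + \<beta>) * P n + Dn n + En n)"
      using P Dn En by (simp add: sums_add sums_mult)
    moreover have "(\<lambda>m. p (n,m) * (\<alpha> + \<beta> + d n m + e n m)) sums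
        ((if n > 0 then \<alpha> * P (n - 1) else 0) + \<beta> * P n + Dn (Suc n) + En n)"
    proof -
      have "(\<lambda>m. if n > 0 then \<alpha> * p (n - 1, m) else 0) sums (if n > 0 then \<alpha> * P (n - 1) else 0)"
        using sums_mult[OF P, of \<alpha> "n - 1"] by simp
      moreover have "(\<lambda>m. if m > 0 then \<beta> * p (n, m - 1) else 0) sums (\<beta> * P n)"
        using sums_mult[OF P, of \<beta> n]
          sums_Suc_iff[of "\<lambda>m. if m > 0 then \<beta> * p (n, m - 1) else 0" "\<beta> * P n"]
        by simp
      moreover have "(\<lambda>m. e n (Suc m) * p (n, Suc m)) sums En n"
        using En[of n] sums_Suc_iff[of "\<lambda>m. e n m * p (n,m)"] by (simp add: e0)
      ultimately have "(\<lambda>m. (if n > 0 then \<alpha> * p (n - 1, m) else 0)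
          + (if m > 0 then \<beta> * p (n, m - 1) else 0)
          + d (Suc n) m * p (Suc n, m) + e n (Suc m) * p (n, Suc m)) sums
          ((if n > 0 then \<alpha> * P (n - 1) else 0) + \<beta> * P n + Dn (Suc n) + En n)"
        by (intro sums_add Dn)
      with bal show ?thesis unfolding birth_death_2d_balance_def by presburger
    qed
    ultimately have "(\<alpha> + \<beta>) * P n + Dn n + En n =
        (if n > 0 then \<alpha> * P (n - 1) else 0) + \<beta> * P n + Dn (Suc n) + En n"
      by (rule sums_unique2)
    then show ?thesis by (simp add: distrib_right)
  qed
  have "Dn (Suc n) = \<alpha> * P n" for n
  proof (induction n)
    case 0 show ?case using flow[of 0] d0 by (simp add: Dn_def)
  next
    case (Suc n) show ?case using flow[of "Suc n"] Suc by simp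
  qed
  then show ?thesis by (simp add: P_def Dn_def)
qed

lemma summable_mult_power_if_factorial_decay:
  fixes x :: "nat \<Rightarrow> real" and c W :: real
  assumes nonneg: "\<And>m. 0 \<le> x m" and decay: "\<And>m. real (Suc m) * x (Suc m) \<le> c * x m"
  shows "summable (\<lambda>m. x m * W ^ m)"
proof -
  obtain N :: nat where N: "2 * \<bar>c\<bar> * \<bar>W\<bar> \<le> real N"
    using real_arch_simple by blast
  show ?thesis
  proof (rule summable_ratio_test[of "1/2" N])
    fix m assume "N \<le> m"
    with N have big: "2 * (\<bar>c\<bar> * \<bar>W\<bar>) \<le> real (Suc m)" by simp
    have "real (Suc m) * (x (Suc m) * \<bar>W\<bar> ^ Suc m) \<le> c * x m * \<bar>W\<bar> ^ Suc m"
      using mult_right_mono[OF decay[of m], of "\<bar>W\<bar> ^ Suc m"] by (simp add: mult.assoc)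
    also have "\<dots> \<le> \<bar>c\<bar> * (x m * \<bar>W\<bar> ^ Suc m)"
      using nonneg[of m] by (simp add: mult.assoc mult_right_mono)
    also have "\<dots> = (\<bar>c\<bar> * \<bar>W\<bar>) * (x m * \<bar>W\<bar> ^ m)"
      by (simp add: mult_ac)
    also have "\<dots> \<le> (real (Suc m) / 2) * (x m * \<bar>W\<bar> ^ m)"
      using big nonneg[of m] by (intro mult_right_mono) auto
    finally have "x (Suc m) * \<bar>W\<bar> ^ Suc m \<le> 1/2 * (x m * \<bar>W\<bar> ^ m)"
      by (simp add: field_simps del: of_nat_Suc)
    then show "norm (x (Suc m) * W ^ Suc m) \<le> 1/2 * norm (x m * W ^ m)"
      using nonneg by (simp add: abs_mult power_abs)
  qed simp
qed

lemma summable_if_contracting_bound: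
  fixes x y :: "nat \<Rightarrow> real" and a b :: real
  assumes x: "\<And>n. 0 \<le> x n" and y: "\<And>n. 0 \<le> y n" "summable y"
    and ab: "0 \<le> b" "b < a"
    and step: "\<And>n. a * x (Suc n) \<le> b * x n + y n"
  shows "summable x"
proof (rule summableI_nonneg_bounded[OF x])
  fix K
  let ?S = "\<lambda>K. \<Sum>n<K. x n"
  have mono: "?S K \<le> ?S (Suc K)" using x by simp
  have "a * ?S (Suc K) = a * x 0 + (\<Sum>n<K. a * x (Suc n))"
    by (simp add: sum.lessThan_Suc_shift sum_distrib_left distrib_left del: sum.lessThan_Suc)
  also have "\<dots> \<le> a * x 0 + (\<Sum>n<K. b * x n + y n)"
    by (intro add_left_mono sum_mono step)
  also have "\<dots> = a * x 0 + b * ?S K + (\<Sum>n<K. y n)"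
    by (simp add: sum.distrib sum_distrib_left)
  also have "\<dots> \<le> a * x 0 + b * ?S (Suc K) + suminf y"
    using mono ab y by (intro add_mono mult_left_mono sum_le_suminf) auto
  finally have "?S (Suc K) \<le> (a * x 0 + suminf y) / (a - b)"
    using ab by (simp add: field_simps)
  with mono show "?S K \<le> (a * x 0 + suminf y) / (a - b)" by linarith
qed

lemma frac_le_inverse_add_power_quotient:
  fixes T :: real and j k m :: nat
  assumes "j \<ge> 1" "T \<ge> 1" "k \<ge> 1"
  shows "real m / real (k + m) \<le> 1 / real j + (T ^ j) ^ m / T ^ k"
proof (cases "m * j < k")
  case True
  then have "real m * real j \<le> real k"
    by (metis of_nat_le_iff of_nat_mult less_imp_le)
  then have "real m / real (k + m) \<le> 1 / real j"
    using assms by (simp add: field_simps)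
  moreover have "0 \<le> (T ^ j) ^ m / T ^ k" using assms by simp
  ultimately show ?thesis by linarith
next
  case False
  then have "T ^ k \<le> (T ^ j) ^ m"
    using assms by (simp add: power_mult[symmetric] mult.commute power_increasing)
  then have "1 \<le> (T ^ j) ^ m / T ^ k" using assms by simp
  moreover have "real m / real (k + m) \<le> 1" using assms by (simp add: divide_le_eq_1)
  ultimately show ?thesis by (smt (verit) of_nat_0_le_iff divide_nonneg_nonneg)
qed

lemma mult_powers_le_add_powers:
  fixes r t R :: real
  assumes r: "0 \<le> r" "max r 1 < t" and R: "0 \<le> R"
  obtains S where "0 \<le> S" "\<And>n m. r ^ n * R ^ m \<le> t ^ n + S ^ m"
proof -
  define r' where "r' = max r 1"
  define R' where "R' = max R 1"
  have r'1: "1 \<le> r'" and "1 < t / r'" using r by (auto simp: r'_def)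
  then obtain J where J: "R' < (t / r') ^ J" using real_arch_pow by blast
  define S where "S = r' ^ J * R'"
  have S: "0 \<le> S" using r'1 by (simp add: S_def R'_def)
  have "r ^ n * R ^ m \<le> t ^ n + S ^ m" for n m
  proof -
    have "r ^ n * R ^ m \<le> r' ^ n * R' ^ m"
      using r R by (intro mult_mono power_mono) (auto simp: r'_def R'_def)
    also have "\<dots> \<le> t ^ n + S ^ m"
    proof (cases "J * m \<le> n")
      case True
      have "R' ^ m \<le> ((t / r') ^ J) ^ m" using J by (intro power_mono) (auto simp: R'_def)
      also have "\<dots> \<le> (t / r') ^ n"
        using True \<open>1 < t / r'\<close> by (simp add: power_mult[symmetric] power_increasing)
      finally have "r' ^ n * R' ^ m \<le> r' ^ n * (t / r') ^ n" using r'1 by simp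
      also have "\<dots> = t ^ n" using r'1 by (simp add: power_divide)
      finally show ?thesis using S by (smt (verit) zero_le_power)
    next
      case False
      have "r' ^ n * R' ^ m \<le> r' ^ (J * m) * R' ^ m"
        using False r'1 by (intro mult_right_mono power_increasing) (auto simp: R'_def)
      also have "\<dots> = S ^ m" by (simp add: S_def power_mult power_mult_distrib mult.commute)
      finally show ?thesis using r by (smt (verit) zero_le_power)
    qed
    finally show ?thesis .
  qed
  with S that show ?thesis by blast
qed

lemma summable_on_pairs_if_iterated_summable:
  fixes f :: "nat \<Rightarrow> nat \<Rightarrow> real"
  assumes f: "\<And>n m. 0 \<le> f n m" and inner: "\<And>n. summable (f n)"
    and outer: "summable (\<lambda>n. \<Sum>m. f n m)"
  shows "(\<lambda>(n,m). f n m) summable_on UNIV"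
proof -
  have "(\<lambda>(n,m). f n m) summable_on UNIV \<times> UNIV"
  proof (rule summable_on_SigmaI)
    show "((\<lambda>m. case (n,m) of (n,m) \<Rightarrow> f n m) has_sum (\<Sum>m. f n m)) UNIV" for n
      using inner f by (simp add: sums_nonneg_imp_has_sum summable_sums)
    show "(\<lambda>n. \<Sum>m. f n m) summable_on UNIV"
      using outer inner f by (intro summable_nonneg_imp_summable_on suminf_nonneg)
  qed (use f in auto)
  then show ?thesis by simp
qed

lemma holomorphic_on_double_power_series:
  fixes g :: "nat \<Rightarrow> nat \<Rightarrow> complex" and R :: ereal and v :: complex
  assumes summable:
    "\<And>u. ereal (norm u) < R \<Longrightarrow> (\<lambda>(n,m). g n m * u ^ n * v ^ m) summable_on UNIV"
  shows "(\<lambda>u. \<Sum>\<^sub>\<infinity>(n,m)\<in>UNIV. g n m * u ^ n * v ^ m) holomorphic_on eball 0 R"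
proof -
  define c where "c n = (\<Sum>\<^sub>\<infinity>m. g n m * v ^ m)" for n
  have series: "(\<lambda>n. c n * u ^ n) sums (\<Sum>\<^sub>\<infinity>(n,m)\<in>UNIV. g n m * u ^ n * v ^ m)"
    if "ereal (norm u) < R" for u
  proof -
    have double: "(\<lambda>(n,m). g n m * u ^ n * v ^ m) summable_on UNIV \<times> UNIV"
      using summable[OF that] by simp
    have rows: "(\<Sum>\<^sub>\<infinity>m. g n m * u ^ n * v ^ m) = c n * u ^ n" for n
      unfolding c_def infsum_cmult_left'[symmetric] by (simp add: mult_ac)
    have "(\<lambda>n. c n * u ^ n) summable_on UNIV"
      using summable_on_Sigma_banach[OF double] by (simp add: rows)
    moreover have "(\<Sum>\<^sub>\<infinity>n. c n * u ^ n) = (\<Sum>\<^sub>\<infinity>(n,m)\<in>UNIV. g n m * u ^ n * v ^ m)"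
      using infsum_Sigma'_banach[OF double] by (simp add: rows)
    ultimately show ?thesis
      by (metis has_sum_imp_sums has_sum_infsum)
  qed
  have "R \<le> conv_radius c"
    by (rule conv_radius_geI_ex') (use series in \<open>force simp: sums_iff\<close>)
  then have "eval_fps (Abs_fps c) holomorphic_on eball 0 R"
    by (intro holomorphic_on_eval_fps) (simp add: fps_conv_radius_def eball_mono)
  then show ?thesis
    by (rule holomorphic_transform) (use series in \<open>auto simp: eval_fps_def sums_iff\<close>)
qed

lemma infsum_eq_sum_finite_support:
  fixes f :: "'a \<Rightarrow> real"
  assumes "finite S" "\<And>y. y \<notin> S \<Longrightarrow> f y = 0"
  shows "infsum f A = sum f (S \<inter> A)"
proof -
  have "infsum f A = infsum f (S \<inter> A)"
    by (rule infsum_cong_neutral) (use assms in auto)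
  also have "\<dots> = sum f (S \<inter> A)" using assms by simp
  finally show ?thesis .
qed

locale ps_queue =
  fixes \<alpha> \<beta> \<mu> \<nu> \<theta> :: real and p :: "nat \<times> nat \<Rightarrow> real"
  assumes pos: "\<alpha> > 0" "\<beta> > 0" "\<mu> > 0" "\<nu> > 0" "\<theta> > 0"
    and stat: "is_stationary_dist (ps_rate \<alpha> \<beta> \<mu> \<nu> \<theta>) p"
begin

definition D :: "nat \<Rightarrow> nat \<Rightarrow> real" where "D n m = \<mu> * real n / real (n + m)"
definition E :: "nat \<Rightarrow> nat \<Rightarrow> real" where "E n m = \<nu> * real m / real (n + m) + \<theta> * real m"

lemma total_rate_out:
  "(\<Sum>\<^sub>\<infinity>y\<in>-{(n,m)}. ps_rate \<alpha> \<beta> \<mu> \<nu> \<theta> (n,m) y) = \<alpha> + \<beta> + D n m + E n m"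
proof -
  let ?S = "{(Suc n, m), (n, Suc m), (n - 1, m), (n, m - 1)}"
  have "(\<Sum>\<^sub>\<infinity>y\<in>-{(n,m)}. ps_rate \<alpha> \<beta> \<mu> \<nu> \<theta> (n,m) y) =
      sum (ps_rate \<alpha> \<beta> \<mu> \<nu> \<theta> (n,m)) (?S \<inter> -{(n,m)})"
    by (rule infsum_eq_sum_finite_support) (auto simp: ps_rate_def Let_def)
  also have "\<dots> = \<alpha> + \<beta> + D n m + E n m"
    by (cases n; cases m)
       (auto simp: ps_rate_def D_def E_def Let_def insert_Diff_if Int_insert_left)
  finally show ?thesis .
qed

lemma total_rate_in:
  "(\<Sum>\<^sub>\<infinity>y\<in>-{(n,m)}. p y * ps_rate \<alpha> \<beta> \<mu> \<nu> \<theta> y (n,m)) =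
     (if n > 0 then \<alpha> * p (n - 1, m) else 0) + (if m > 0 then \<beta> * p (n, m - 1) else 0)
     + D (Suc n) m * p (Suc n, m) + E n (Suc m) * p (n, Suc m)"
proof -
  let ?S = "{(Suc n, m), (n, Suc m), (n - 1, m), (n, m - 1)}"
  have "(\<Sum>\<^sub>\<infinity>y\<in>-{(n,m)}. p y * ps_rate \<alpha> \<beta> \<mu> \<nu> \<theta> y (n,m)) =
      sum (\<lambda>y. p y * ps_rate \<alpha> \<beta> \<mu> \<nu> \<theta> y (n,m)) (?S \<inter> -{(n,m)})"
    by (rule infsum_eq_sum_finite_support) (auto simp: ps_rate_def Let_def)
  also have "\<dots> = (if n > 0 then \<alpha> * p (n - 1, m) else 0) + (if m > 0 then \<beta> * p (n, m - 1) else 0)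
      + D (Suc n) m * p (Suc n, m) + E n (Suc m) * p (n, Suc m)"
    by (cases n; cases m)
       (auto simp: ps_rate_def D_def E_def Let_def insert_Diff_if Int_insert_left algebra_simps)
  finally show ?thesis .
qed

lemma balance: "birth_death_2d_balance \<alpha> \<beta> D E p"
  using stat total_rate_out total_rate_in
  unfolding is_stationary_dist_def birth_death_2d_balance_def by metis

lemma p_nonneg: "0 \<le> p x"
  using stat by (cases x) (simp add: is_stationary_dist_def)

lemma p_summable: "p summable_on UNIV"
  using stat by (auto simp: is_stationary_dist_def summable_on_def)

lemma summable_p_fixed_fst: "summable (\<lambda>m. p (n,m))"
proof -
  have "p summable_on range (Pair n)"
    using p_summable by (rule summable_on_subset) simp
  then have "(\<lambda>m. p (n,m)) summable_on UNIV"
    by (subst (asm) summable_on_reindex) (auto simp: o_def inj_on_def)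
  then show ?thesis by (rule summable_on_imp_summable)
qed

lemma summable_p_fixed_snd: "summable (\<lambda>n. p (n,m))"
proof -
  have "p summable_on range (\<lambda>n. (n,m))"
    using p_summable by (rule summable_on_subset) simp
  then have "(\<lambda>n. p (n,m)) summable_on UNIV"
    by (subst (asm) summable_on_reindex) (auto simp: o_def inj_on_def)
  then show ?thesis by (rule summable_on_imp_summable)
qed

lemma D_nonneg: "0 \<le> D n m" and D_zero [simp]: "D 0 m = 0"
  using pos by (simp_all add: D_def)

lemma D_le: "D n m \<le> \<mu>"
  using pos by (cases "n + m = 0") (auto simp: D_def field_simps)

lemma E_nonneg: "0 \<le> E n m" and E_ge: "\<theta> * real m \<le> E n m" and E_zero [simp]: "E n 0 = 0"
  using pos by (simp_all add: E_def)

lemma E_le: "E n m \<le> \<nu> + \<theta> * real m"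
proof -
  have "\<nu> * real m / real (n + m) \<le> \<nu>"
    using pos by (cases "n + m = 0") (auto simp: field_simps)
  then show ?thesis by (simp add: E_def)
qed

lemma summable_D_fixed_snd: "summable (\<lambda>n. D n m * p (n,m))"
  by (rule summable_comparison_test'[of "\<lambda>n. \<mu> * p (n,m)"])
     (auto intro!: summable_mult summable_p_fixed_snd mult_right_mono simp: D_nonneg p_nonneg D_le)

lemma summable_E_fixed_snd: "summable (\<lambda>n. E n m * p (n,m))"
  by (rule summable_comparison_test'[of "\<lambda>n. (\<nu> + \<theta> * real m) * p (n,m)"])
     (auto intro!: summable_mult summable_p_fixed_snd mult_right_mono simp: E_nonneg p_nonneg E_le)

definition pN :: "nat \<Rightarrow> real" where "pN n = (\<Sum>m. p (n,m))"
definition pM :: "nat \<Rightarrow> real" where "pM m = (\<Sum>n. p (n,m))"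

lemma pN_nonneg: "0 \<le> pN n"
  unfolding pN_def by (rule suminf_nonneg[OF summable_p_fixed_fst p_nonneg])

lemma pM_nonneg: "0 \<le> pM m"
  unfolding pM_def by (rule suminf_nonneg[OF summable_p_fixed_snd p_nonneg])

lemma p_le_pM: "p (n,m) \<le> pM m"
  unfolding pM_def using sum_le_suminf[OF summable_p_fixed_snd, of "{n}"] p_nonneg by simp

lemma pM_flow: "(\<Sum>n. E n (Suc m) * p (n, Suc m)) = \<beta> * pM m"
  unfolding pM_def
  by (rule birth_death_2d_level_crossing[OF birth_death_2d_balance_swap[OF balance], simplified])
     (simp_all add: summable_p_fixed_snd summable_D_fixed_snd summable_E_fixed_snd)

lemma pM_decay: "real (Suc m) * pM (Suc m) \<le> \<beta> / \<theta> * pM m"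
proof -
  have "\<theta> * (real (Suc m) * pM (Suc m)) = (\<Sum>n. \<theta> * real (Suc m) * p (n, Suc m))"
    by (simp add: pM_def suminf_mult summable_p_fixed_snd mult.assoc)
  also have "\<dots> \<le> (\<Sum>n. E n (Suc m) * p (n, Suc m))"
    by (intro suminf_le summable_mult summable_p_fixed_snd summable_E_fixed_snd
        mult_right_mono E_ge p_nonneg)
  also have "\<dots> = \<theta> * (\<beta> / \<theta> * pM m)"
    using pos by (simp add: pM_flow)
  finally show ?thesis using pos(5) by (rule mult_left_le_imp_le)
qed

lemma summable_pM_power: "summable (\<lambda>m. pM m * W ^ m)"
  using pM_nonneg pM_decay by (rule summable_mult_power_if_factorial_decay)

lemma summable_D_fixed_fst: "summable (\<lambda>m. D n m * p (n,m))"
  by (rule summable_comparison_test'[of "\<lambda>m. \<mu> * p (n,m)"])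
     (auto intro!: summable_mult summable_p_fixed_fst mult_right_mono simp: D_nonneg p_nonneg D_le)

lemma summable_E_fixed_fst: "summable (\<lambda>m. E n m * p (n,m))"
proof (rule summable_comparison_test'[of "\<lambda>m. (\<nu> + \<theta>) * (pM m * 2 ^ m)"])
  show "summable (\<lambda>m. (\<nu> + \<theta>) * (pM m * 2 ^ m))"
    by (intro summable_mult summable_pM_power)
  fix m
  have "real m \<le> 2 ^ m"
    using of_nat_less_two_power[of m, where 'a = real] by linarith
  then have "\<theta> * real m \<le> \<theta> * 2 ^ m" and "\<nu> \<le> \<nu> * 2 ^ m"
    using pos by simp_all
  then have "\<nu> + \<theta> * real m \<le> (\<nu> + \<theta>) * 2 ^ m"
    by (simp add: distrib_right)
  then have "E n m * p (n,m) \<le> ((\<nu> + \<theta>) * 2 ^ m) * pM m"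
    using E_le[of n m] p_le_pM[of n m] E_nonneg p_nonneg pos by (intro mult_mono) auto
  then show "norm (E n m * p (n,m)) \<le> (\<nu> + \<theta>) * (pM m * 2 ^ m)"
    using E_nonneg p_nonneg by (simp add: mult_ac)
qed

lemma pN_flow: "(\<Sum>m. D (Suc n) m * p (Suc n, m)) = \<alpha> * pN n"
  unfolding pN_def
  by (rule birth_death_2d_level_crossing[OF balance])
     (simp_all add: summable_p_fixed_fst summable_D_fixed_fst summable_E_fixed_fst)

lemma D_Suc: "D (Suc n) m = \<mu> - \<mu> * (real m / real (Suc n + m))"
  by (simp add: D_def field_simps)

lemma service_defect_le:
  assumes j: "1 \<le> j" and T: "1 \<le> T"
  shows "(\<mu> - D (Suc n) m) * p (Suc n, m) \<le>
    \<mu> / real j * p (Suc n, m) + \<mu> / T ^ Suc n * (pM m * (T ^ j) ^ m)"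
proof -
  have "(\<mu> - D (Suc n) m) * p (Suc n, m) = \<mu> * (real m / real (Suc n + m)) * p (Suc n, m)"
    by (simp add: D_Suc)
  also have "\<dots> \<le> \<mu> * (1 / real j + (T ^ j) ^ m / T ^ Suc n) * p (Suc n, m)"
    using frac_le_inverse_add_power_quotient[OF j T, of "Suc n" m] pos p_nonneg
    by (intro mult_right_mono mult_left_mono) auto
  also have "\<dots> = \<mu> / real j * p (Suc n, m) + \<mu> / T ^ Suc n * ((T ^ j) ^ m * p (Suc n, m))"
    by (simp add: distrib_left distrib_right)
  also have "\<dots> \<le> \<mu> / real j * p (Suc n, m) + \<mu> / T ^ Suc n * ((T ^ j) ^ m * pM m)"
    using p_le_pM pos T by (intro add_left_mono mult_left_mono) auto
  finally show ?thesis by (simp add: mult.commute)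
qed

lemma pN_Suc_le:
  assumes j: "1 \<le> j" and T: "1 \<le> T"
  shows "(1 - 1 / real j) * pN (Suc n) \<le> \<alpha> / \<mu> * pN n + (\<Sum>m. pM m * (T ^ j) ^ m) / T ^ Suc n"
proof -
  define C where "C = (\<Sum>m. pM m * (T ^ j) ^ m)"
  have "(\<lambda>m. (\<mu> - D (Suc n) m) * p (Suc n, m)) sums (\<mu> * pN (Suc n) - \<alpha> * pN n)"
  proof -
    have "(\<lambda>m. \<mu> * p (Suc n, m) - D (Suc n) m * p (Suc n, m)) sums (\<mu> * pN (Suc n) - \<alpha> * pN n)"
      unfolding pN_def pN_flow[of n, unfolded pN_def, symmetric]
      by (intro sums_diff sums_mult summable_sums summable_p_fixed_fst summable_D_fixed_fst)
    then show ?thesis by (simp add: left_diff_distrib)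
  qed
  moreover have "(\<lambda>m. \<mu> / real j * p (Suc n, m) + \<mu> / T ^ Suc n * (pM m * (T ^ j) ^ m)) sums
      (\<mu> / real j * pN (Suc n) + \<mu> / T ^ Suc n * C)"
    unfolding pN_def C_def
    by (intro sums_add sums_mult summable_sums summable_p_fixed_fst summable_pM_power)
  ultimately have "\<mu> * pN (Suc n) - \<alpha> * pN n \<le> \<mu> / real j * pN (Suc n) + \<mu> / T ^ Suc n * C"
    by (rule sums_le[rotated]) (use service_defect_le[OF j T] in blast)
  moreover have "\<mu> * ((1 - 1 / real j) * pN (Suc n)) = \<mu> * pN (Suc n) - \<mu> / real j * pN (Suc n)"
    by (simp add: algebra_simps)
  moreover have "\<mu> * (\<alpha> / \<mu> * pN n + C / T ^ Suc n) = \<alpha> * pN n + \<mu> / T ^ Suc n * C"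
    using pos by (simp add: distrib_left)
  ultimately have "\<mu> * ((1 - 1 / real j) * pN (Suc n)) \<le> \<mu> * (\<alpha> / \<mu> * pN n + C / T ^ Suc n)"
    by linarith
  then show ?thesis
    using pos(3) unfolding C_def by (rule mult_left_le_imp_le)
qed

lemma summable_pN_power:
  assumes t: "0 \<le> t" "\<alpha> / \<mu> * t < 1"
  shows "summable (\<lambda>n. pN n * t ^ n)"
proof -
  obtain j :: nat where j: "0 < j" "1 / real j < 1 - \<alpha> / \<mu> * t"
    using ex_inverse_of_nat_less[of "1 - \<alpha> / \<mu> * t"] t by (auto simp: inverse_eq_divide)
  define T where "T = t + 1"
  define C where "C = (\<Sum>m. pM m * (T ^ j) ^ m)"
  have step: "(1 - 1 / real j) * (pN (Suc n) * t ^ Suc n) \<le>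
      \<alpha> / \<mu> * t * (pN n * t ^ n) + C * (t / T) ^ Suc n" for n
  proof -
    have "(1 - 1 / real j) * pN (Suc n) * t ^ Suc n \<le> (\<alpha> / \<mu> * pN n + C / T ^ Suc n) * t ^ Suc n"
      using pN_Suc_le[of j T n] j t by (intro mult_right_mono) (auto simp: C_def T_def)
    also have "\<dots> = \<alpha> / \<mu> * t * (pN n * t ^ n) + C * (t / T) ^ Suc n"
      using t by (simp add: T_def power_divide field_simps)
    finally show ?thesis by (simp add: mult.assoc)
  qed
  have "0 \<le> C"
    unfolding C_def by (intro suminf_nonneg summable_pM_power) (simp add: pM_nonneg T_def t)
  moreover have "0 \<le> \<alpha> / \<mu> * t"
    using pos t by simp
  moreover have "summable (\<lambda>n. C * (t / T) ^ Suc n)"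
    using t by (intro summable_mult summable_geometric) (simp add: T_def)
  ultimately show ?thesis
    using j t pN_nonneg
    by (intro summable_if_contracting_bound[where x = "\<lambda>n. pN n * t ^ n"
          and y = "\<lambda>n. C * (t / T) ^ Suc n", OF _ _ _ _ _ step]) (auto simp: T_def)
qed

lemma summable_on_p_power_fst:
  assumes "0 \<le> t" "\<alpha> / \<mu> * t < 1"
  shows "(\<lambda>(n,m). p (n,m) * t ^ n) summable_on UNIV"
proof (rule summable_on_pairs_if_iterated_summable)
  show "summable (\<lambda>n. \<Sum>m. p (n,m) * t ^ n)"
    using summable_pN_power[OF assms] by (simp add: pN_def suminf_mult2 summable_p_fixed_fst)
qed (use assms in \<open>auto simp: p_nonneg intro: summable_mult2 summable_p_fixed_fst\<close>)

lemma summable_on_p_power_snd: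
  assumes "0 \<le> S"
  shows "(\<lambda>(n,m). p (n,m) * S ^ m) summable_on UNIV"
proof -
  have "(\<lambda>(m,n). p (n,m) * S ^ m) summable_on UNIV"
  proof (rule summable_on_pairs_if_iterated_summable)
    show "summable (\<lambda>m. \<Sum>n. p (n,m) * S ^ m)"
      using summable_pM_power[of S] by (simp add: pM_def suminf_mult2 summable_p_fixed_snd)
  qed (use assms in \<open>auto simp: p_nonneg intro: summable_mult2 summable_p_fixed_snd\<close>)
  then show ?thesis
    using summable_on_swap[of "\<lambda>(m,n). p (n,m) * S ^ m" UNIV UNIV] by simp
qed

lemma summable_on_gen_fun_terms:
  assumes \<rho>: "\<alpha> / \<mu> < 1" and u: "norm u < 1 / (\<alpha> / \<mu>)"
  shows "(\<lambda>(n,m). complex_of_real (p (n,m)) * u ^ n * v ^ m) summable_on UNIV"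
proof -
  have "1 < \<mu> / \<alpha>" using \<rho> pos by (simp add: field_simps)
  moreover have "norm u < \<mu> / \<alpha>" using u by simp
  ultimately have "max (norm u) 1 < \<mu> / \<alpha>" by simp
  then obtain t where t: "max (norm u) 1 < t" "t < \<mu> / \<alpha>"
    using dense by blast
  then have t0: "0 \<le> t" and t1: "\<alpha> / \<mu> * t < 1"
    using pos by (simp_all add: field_simps)
  obtain S where S: "0 \<le> S" "\<And>n m. norm u ^ n * norm v ^ m \<le> t ^ n + S ^ m"
    using mult_powers_le_add_powers[OF norm_ge_zero t(1) norm_ge_zero] by blast
  have "(\<lambda>x. norm ((\<lambda>(n,m). complex_of_real (p (n,m)) * u ^ n * v ^ m) x)) summable_on UNIV"
  proof (rule summable_on_comparison_test)
    show "(\<lambda>x. (\<lambda>(n,m). p (n,m) * t ^ n) x + (\<lambda>(n,m). p (n,m) * S ^ m) x) summable_on UNIV"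
      by (intro summable_on_add summable_on_p_power_fst summable_on_p_power_snd t0 t1 S)
  next
    fix x :: "nat \<times> nat"
    obtain n m where x: "x = (n,m)" by (cases x)
    have "norm (complex_of_real (p (n,m)) * u ^ n * v ^ m) = p (n,m) * (norm u ^ n * norm v ^ m)"
      using p_nonneg by (simp add: norm_mult norm_power)
    also have "\<dots> \<le> p (n,m) * (t ^ n + S ^ m)"
      using S p_nonneg by (intro mult_left_mono) auto
    finally show "norm ((\<lambda>(n,m). complex_of_real (p (n,m)) * u ^ n * v ^ m) x) \<le>
        (\<lambda>(n,m). p (n,m) * t ^ n) x + (\<lambda>(n,m). p (n,m) * S ^ m) x"
      by (simp add: x distrib_left)
  qed auto
  then show ?thesis by (rule abs_summable_summable)
qed

lemma gen_fun_holomorphic_fst: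
  assumes "\<alpha> / \<mu> < 1"
  shows "(\<lambda>u. gen_fun p u v) holomorphic_on ball 0 (1 / (\<alpha> / \<mu>))"
proof -
  have "(\<lambda>u. \<Sum>\<^sub>\<infinity>(n,m)\<in>UNIV. complex_of_real (p (n,m)) * u ^ n * v ^ m)
      holomorphic_on eball 0 (ereal (1 / (\<alpha> / \<mu>)))"
    by (rule holomorphic_on_double_power_series, rule summable_on_gen_fun_terms[OF assms]) simp
  then show ?thesis by (simp add: gen_fun_def)
qed

lemma gen_fun_holomorphic_snd:
  assumes \<rho>: "\<alpha> / \<mu> < 1" and u: "norm u < 1 / (\<alpha> / \<mu>)"
  shows "(\<lambda>v. gen_fun p u v) holomorphic_on UNIV"
proof -
  let ?g = "\<lambda>v (m,n). complex_of_real (p (n,m)) * v ^ m * u ^ n"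
  have swap: "(?g v has_sum gen_fun p u v) UNIV" for v
    using has_sum_infsum[OF summable_on_gen_fun_terms[OF \<rho> u, of v]]
      has_sum_swap[of "\<lambda>(n,m). complex_of_real (p (n,m)) * u ^ n * v ^ m" UNIV UNIV]
    by (simp add: gen_fun_def case_prod_unfold mult_ac)
  have "(\<lambda>v. \<Sum>\<^sub>\<infinity>x\<in>UNIV. ?g v x) holomorphic_on eball 0 \<infinity>"
    by (rule holomorphic_on_double_power_series[where g = "\<lambda>m n. complex_of_real (p (n,m))"])
       (use swap in \<open>auto simp: summable_on_def\<close>)
  moreover have "(\<Sum>\<^sub>\<infinity>x\<in>UNIV. ?g v x) = gen_fun p u v" for v
    using swap by (rule infsumI)
  ultimately show ?thesis by simp
qed

end

theorem lemma1:
  fixes \<alpha> \<beta> \<mu> \<nu> \<theta> :: real and p :: "nat \<times> nat \<Rightarrow> real"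
  assumes "\<alpha> > 0" "\<beta> > 0" "\<mu> > 0" "\<nu> > 0" "\<theta> > 0"
    and "\<alpha> / \<mu> < 1"
    and "is_stationary_dist (ps_rate \<alpha> \<beta> \<mu> \<nu> \<theta>) p"
  shows "(\<forall>u v. norm u < 1 / (\<alpha> / \<mu>) \<longrightarrow>
            (\<lambda>(n,m). complex_of_real (p (n,m)) * u ^ n * v ^ m) summable_on UNIV)
       \<and> (\<forall>v. (\<lambda>u. gen_fun p u v) holomorphic_on ball 0 (1 / (\<alpha> / \<mu>)))
       \<and> (\<forall>u. norm u < 1 / (\<alpha> / \<mu>) \<longrightarrow> (\<lambda>v. gen_fun p u v) holomorphic_on UNIV)"
proof -
  interpret ps_queue \<alpha> \<beta> \<mu> \<nu> \<theta> p
    using assms by unfold_locales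
  show ?thesis
    using summable_on_gen_fun_terms gen_fun_holomorphic_fst gen_fun_holomorphic_snd assms(6)
    by blast
qed

end
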